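(* Let $\mathcal{M}$ be a circular orientable embedding of a connected graph $X$ and let $U$ be the vertex-face transition matrix of $\mathcal{M}$. Then $U^T$ is the vertex-face transition matrix of the dual embedding $\mathcal{M}^*$ of $\mathcal{M}$. Here each arc $(u,v)$ of $X$ is identified with the arc of the dual graph that crosses the edge $\{u,v\}$ and has tail the face $f_{uv}$; the vertex-face transition matrix of $\mathcal{M}^*$ is defined with the same construction as for $\mathcal{M}$.
   Context: Setting. $X$ is a connected graph with $n$ vertices and $\ell$ edges, and $\mathcal{M}$ is an embedding of $X$ on a closed orientable surface. The embedding is circular: it is cellular and every face is bounded by a cycle. An arc is an ordered pair $(u,v)$ with $\{u,v\}$ an edge, and $u$ is its tail. Consistent orientation. Fix an orientation of all face boundaries such that, for each edge shared by faces $f$ and $h$, the direction the edge receives in $f$ is opposite to the direction it receives in $h$. Each face then gives a facial walk, which is a directed cycle, and every arc lies in exactly one facial walk. Write $f_{uv}$ for the face whose facial walk contains $(u,v)$, and $\deg(f)$ for the length of face $f$. Matrices. $M$ is the arc-face incidence matrix: $M_{(a,b),f}=1$ iff $f=f_{ab}$, and $0$ otherwise. $N$ is the arc-tail incidence matrix: $N_{(a,b),u}=1$ iff $a=u$, and $0$ otherwise. $\widehat M$ and $\widehat N$ are obtained from $M$ and $N$ by scaling each column to unit length. The vertex-face transition matrix is $U=(2\widehat M\widehat M^T-I)(2\widehat N\widehat N^T-I)$. Dual embedding. The dual embedding $\mathcal{M}^*$ has the faces of $\mathcal{M}$ as vertices. Its edges cross the edges of $X$, and its faces correspond to the vertices of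 $X$. *)

theory Defs
  imports Complex_Main "HOL-Combinatorics.Permutations"
begin

text \<open>An orientable embedding of a graph given as a rotation system on its set of
darts (arcs): a finite set of darts D, the arc reversal theta (a fixed-point-free
involution of D, theta (u,v) = (v,u)) and the rotation sigma (a permutation of D whose
cycles are the arcs with a common tail, in the local cyclic order).  The facial walk
successor of an arc is phi = sigma o theta: after traversing (u,v) continue with the
arc following (v,u) in the rotation at v.\<close>

type_synonym 'd emb = "'d set \<times> ('d \<Rightarrow> 'd) \<times> ('d \<Rightarrow> 'd)"

definition darts :: "'d emb \<Rightarrow> 'd set" where "darts E = fst E"
definition rot :: "'d emb \<Rightarrow> 'd \<Rightarrow> 'd" where "rot E = fst (snd E)"
definition rev_arc :: "'d emb \<Rightarrow> 'd \<Rightarrow> 'd" where "rev_arc E = snd (snd E)"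
definition face_succ :: "'d emb \<Rightarrow> 'd \<Rightarrow> 'd" where "face_succ E = rot E \<circ> rev_arc E"

definition orbit_of :: "('d \<Rightarrow> 'd) \<Rightarrow> 'd \<Rightarrow> 'd set" where
  "orbit_of p a = {b. \<exists>n. (p ^^ n) a = b}"

definition orbits :: "'d set \<Rightarrow> ('d \<Rightarrow> 'd) \<Rightarrow> 'd set set" where
  "orbits D p = orbit_of p ` D"

text \<open>Vertices are identified with their sets of outgoing arcs, faces with the set of
arcs of their facial walk.\<close>
definition vertices :: "'d emb \<Rightarrow> 'd set set" where "vertices E = orbits (darts E) (rot E)"
definition faces :: "'d emb \<Rightarrow> 'd set set" where "faces E = orbits (darts E) (face_succ E)"
definition tail :: "'d emb \<Rightarrow> 'd \<Rightarrow> 'd set" where "tail E a = orbit_of (rot E) a"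
definition head :: "'d emb \<Rightarrow> 'd \<Rightarrow> 'd set" where "head E a = tail E (rev_arc E a)"
definition face_of :: "'d emb \<Rightarrow> 'd \<Rightarrow> 'd set" where "face_of E a = orbit_of (face_succ E) a"

definition rotation_system :: "'d emb \<Rightarrow> bool" where
  "rotation_system E \<longleftrightarrow> finite (darts E) \<and> darts E \<noteq> {} \<and>
     rot E permutes darts E \<and> rev_arc E permutes darts E \<and>
     (\<forall>a\<in>darts E. rev_arc E (rev_arc E a) = a \<and> rev_arc E a \<noteq> a)"

definition simple_graph_emb :: "'d emb \<Rightarrow> bool" where
  "simple_graph_emb E \<longleftrightarrow>
     (\<forall>a\<in>darts E. tail E a \<noteq> head E a) \<and>
     (\<forall>a\<in>darts E. \<forall>b\<in>darts E. tail E a = tail E b \<and> head E a = head E b \<longrightarrow> a = b)"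

definition connected_emb :: "'d emb \<Rightarrow> bool" where
  "connected_emb E \<longleftrightarrow> (\<forall>a\<in>darts E. \<forall>b\<in>darts E.
     (a, b) \<in> ({(x, rot E x) | x. x \<in> darts E} \<union> {(x, rev_arc E x) | x. x \<in> darts E})\<^sup>*)"

definition circular_emb :: "'d emb \<Rightarrow> bool" where
  "circular_emb E \<longleftrightarrow> (\<forall>a\<in>darts E. \<forall>b\<in>face_of E a. b \<noteq> a \<longrightarrow> tail E b \<noteq> tail E a)"

definition mat_mul :: "'d set \<Rightarrow> ('d \<Rightarrow> 'd \<Rightarrow> real) \<Rightarrow> ('d \<Rightarrow> 'd \<Rightarrow> real) \<Rightarrow> 'd \<Rightarrow> 'd \<Rightarrow> real" where
  "mat_mul D A B a c = (\<Sum>b\<in>D. A a b * B b c)"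

definition id_mat :: "'d \<Rightarrow> 'd \<Rightarrow> real" where "id_mat a b = (if a = b then 1 else 0)"


definition arc_face_M :: "'d emb \<Rightarrow> 'd \<Rightarrow> 'd set \<Rightarrow> real" where
  "arc_face_M E a f = (if f \<in> faces E \<and> f = face_of E a then 1 else 0)"
definition arc_tail_N :: "'d emb \<Rightarrow> 'd \<Rightarrow> 'd set \<Rightarrow> real" where
  "arc_tail_N E a u = (if u \<in> vertices E \<and> u = tail E a then 1 else 0)"

definition col_normalize :: "'d set \<Rightarrow> ('d \<Rightarrow> 'c \<Rightarrow> real) \<Rightarrow> 'd \<Rightarrow> 'c \<Rightarrow> real" where
  "col_normalize D A a c = A a c / sqrt (\<Sum>b\<in>D. (A b c)\<^sup>2)"

definition gram_of :: "'d set \<Rightarrow> 'c set \<Rightarrow> ('d \<Rightarrow> 'c \<Rightarrow> real) \<Rightarrow> 'd \<Rightarrow> 'd \<Rightarrow> real" where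
  "gram_of D Cols A a b = (\<Sum>c\<in>Cols. col_normalize D A a c * col_normalize D A b c)"

definition transition_matrix :: "'d emb \<Rightarrow> 'd \<Rightarrow> 'd \<Rightarrow> real" where
  "transition_matrix E =
     mat_mul (darts E)
       (\<lambda>a b. 2 * gram_of (darts E) (faces E) (arc_face_M E) a b - id_mat a b)
       (\<lambda>a b. 2 * gram_of (darts E) (vertices E) (arc_tail_N E) a b - id_mat a b)"

text \<open>Dual embedding: the dual arc of a (crossing the edge of a) has tail the face f_a, and
the rotation at a dual vertex (face f) is the cyclic order of its facial walk.\<close>
definition dual_emb :: "'d emb \<Rightarrow> 'd emb" where
  "dual_emb E = (darts E, face_succ E, rev_arc E)"

end

theory Submission
  imports Defs
begin

text \<open>Passing to the dual swaps rotation and face successor (the arc reversal is an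
involution, so rot = face_succ o rev_arc), hence swaps vertices with faces and tails
with faces of arcs; so the two reflections defining U are exchanged.  Both reflections are
symmetric, and the transpose of a product of symmetric matrices is the product in reverse
order.\<close>

lemma mat_mul_swap:
  "mat_mul D A B a b = mat_mul D (\<lambda>x y. B y x) (\<lambda>x y. A y x) b a"
  unfolding mat_mul_def by (simp add: mult.commute)

lemma gram_of_sym: "gram_of D Cols A a b = gram_of D Cols A b a"
  unfolding gram_of_def by (simp add: mult.commute)

lemma id_mat_sym: "id_mat a b = id_mat b a"
  unfolding id_mat_def by auto

lemma rotation_system_rev_arc_involution:
  assumes "rotation_system E"
  shows "rev_arc E (rev_arc E x) = x"
proof (cases "x \<in> darts E")
  case True
  then show ?thesis using assms unfolding rotation_system_def by blast
next
  case False
  have "rev_arc E permutes darts E" using assms unfolding rotation_system_def by blast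
  with False have "rev_arc E x = x" by (simp add: permutes_def)
  then show ?thesis by simp
qed

lemma darts_dual_emb [simp]: "darts (dual_emb E) = darts E"
  by (simp add: dual_emb_def darts_def)

lemma rot_dual_emb [simp]: "rot (dual_emb E) = face_succ E"
  by (simp add: dual_emb_def rot_def face_succ_def rev_arc_def)

lemma face_succ_dual_emb:
  assumes "rotation_system E"
  shows "face_succ (dual_emb E) = rot E"
proof
  fix x
  have "rev_arc (dual_emb E) = rev_arc E" by (simp add: dual_emb_def rev_arc_def)
  then show "face_succ (dual_emb E) x = rot E x"
    by (simp add: face_succ_def rotation_system_rev_arc_involution[OF assms])
qed

lemma vertices_dual_emb: "vertices (dual_emb E) = faces E"
  unfolding vertices_def faces_def by simp

lemma tail_dual_emb: "tail (dual_emb E) = face_of E"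
  unfolding tail_def face_of_def by simp

lemma faces_dual_emb:
  assumes "rotation_system E"
  shows "faces (dual_emb E) = vertices E"
  unfolding vertices_def faces_def face_succ_dual_emb[OF assms] by simp

lemma face_of_dual_emb:
  assumes "rotation_system E"
  shows "face_of (dual_emb E) = tail E"
  unfolding tail_def face_of_def face_succ_dual_emb[OF assms] ..

lemma arc_face_M_dual_emb:
  assumes "rotation_system E"
  shows "arc_face_M (dual_emb E) = arc_tail_N E"
  unfolding arc_face_M_def arc_tail_N_def
    faces_dual_emb[OF assms] face_of_dual_emb[OF assms] ..

lemma arc_tail_N_dual_emb: "arc_tail_N (dual_emb E) = arc_face_M E"
  unfolding arc_face_M_def arc_tail_N_def vertices_dual_emb tail_dual_emb ..

lemma transition_matrix_dual_emb:
  fixes E :: "'d emb"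
  assumes "rotation_system E"
  shows "transition_matrix (dual_emb E) a b = transition_matrix E b a"
proof -
  let ?R = "\<lambda>Cols A x y. 2 * gram_of (darts E) Cols A x y - id_mat x y"
  have R_sym: "(\<lambda>x y. ?R Cols A y x) = ?R Cols A" for Cols and A :: "'d \<Rightarrow> 'd set \<Rightarrow> real"
    by (simp add: gram_of_sym id_mat_sym)
  have "transition_matrix (dual_emb E) a b
      = mat_mul (darts E) (?R (vertices E) (arc_tail_N E)) (?R (faces E) (arc_face_M E)) a b"
    unfolding transition_matrix_def arc_face_M_dual_emb[OF assms] arc_tail_N_dual_emb
      vertices_dual_emb faces_dual_emb[OF assms] by simp
  also have "\<dots> = mat_mul (darts E) (?R (faces E) (arc_face_M E)) (?R (vertices E) (arc_tail_N E)) b a"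
    by (subst mat_mul_swap) (simp only: R_sym)
  also have "\<dots> = transition_matrix E b a"
    unfolding transition_matrix_def ..
  finally show ?thesis .
qed

theorem lemma2p1:
  fixes E :: "'d emb"
  assumes "rotation_system E"
    and "simple_graph_emb E"
    and "connected_emb E"
    and "circular_emb E"
  shows "\<forall>a\<in>darts E. \<forall>b\<in>darts E.
           transition_matrix (dual_emb E) a b = transition_matrix E b a"
  using transition_matrix_dual_emb[OF assms(1)] by blast

end
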